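(* Let $r\ge1$ be an integer. There is a unique real sequence $b=(b_0,b_1,\dots)$ with $b_0=1$ such that the leading diagonal of the difference table of depth $r$ of $b$ equals $(1,b_0,b_1,b_2,\dots)$. This sequence is $b_n=a_{n+1}$, where $(a_n)$ is defined by $a_0=1$, $a_{n+1}=\sum_{k=0}^n\binom nk r^{n-k}a_k$. In particular, for $r=1$, $b=(1,2,5,15,52,\dots)$ is the sequence of Bell numbers $B_1,B_2,\dots$.
   Context: The difference table of depth 1 of a sequence $c=(c_0,c_1,\dots)$ is its ordinary difference table, with top row $c$ and each subsequent row the successive differences of the row above; its leading diagonal is $(\Delta^0c_0,\Delta^1c_0,\Delta^2c_0,\dots)$ where $\Delta^mc_0=\sum_{k=0}^m(-1)^{m-k}\binom mk c_k$. The difference table of depth $r+1$ of $c$ is the difference table of depth 1 of the leading diagonal of the depth-$r$ table of $c$; its leading diagonal is the depth-$(r+1)$ leading diagonal. The Bell numbers are defined by $B_0=1$, $B_{n+1}=\sum_{k=0}^n\binom nk B_k$. *)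

theory Defs
  imports Complex_Main
begin

text \<open>Leading diagonal of the (depth 1) difference table of a real sequence c:
  entry m is Delta^m c_0 = sum_{k=0}^m (-1)^(m-k) (m choose k) c_k.\<close>
definition lead_diag :: "(nat \<Rightarrow> real) \<Rightarrow> nat \<Rightarrow> real" where
  "lead_diag c m = (\<Sum>k\<le>m. (-1) ^ (m - k) * real (m choose k) * c k)"

definition lead_diag_depth :: "nat \<Rightarrow> (nat \<Rightarrow> real) \<Rightarrow> nat \<Rightarrow> real" where
  "lead_diag_depth r c = (lead_diag ^^ r) c"

fun seq_a :: "nat \<Rightarrow> nat \<Rightarrow> nat" where
  "seq_a r 0 = 1"
| "seq_a r (Suc n) = (\<Sum>k\<le>n. (n choose k) * r ^ (n - k) * seq_a r k)"

fun bell :: "nat \<Rightarrow> nat" where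
  "bell 0 = 1"
| "bell (Suc n) = (\<Sum>k\<le>n. (n choose k) * bell k)"

end

theory Submission
  imports Defs
begin

text \<open>On exponential generating functions the binomial transform with parameter \<open>a\<close> is
  multiplication by \<open>exp (a x)\<close>, so these transforms compose by adding parameters.  The leading
  diagonal of a difference table is the transform with parameter \<open>-1\<close>, hence the depth-\<open>r\<close> diagonal
  is the transform with parameter \<open>-r\<close>, whose inverse has parameter \<open>r\<close>.  The condition on \<open>b\<close>
  thus says that \<open>b\<close> is the transform with parameter \<open>r\<close> of \<open>(1, b\<^sub>0, b\<^sub>1, \<dots>)\<close>, which is exactly
  the recursion of \<open>a\<^sub>n\<close> shifted by one.\<close>

definition binomial_transform :: "'a::comm_ring_1 \<Rightarrow> (nat \<Rightarrow> 'a) \<Rightarrow> nat \<Rightarrow> 'a" where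
  "binomial_transform a c m = (\<Sum>k\<le>m. of_nat (m choose k) * a ^ (m - k) * c k)"

lemma sum_atMost_atMost_swap:
  fixes f :: "nat \<Rightarrow> nat \<Rightarrow> 'a::comm_monoid_add"
  shows "(\<Sum>k\<le>m. \<Sum>j\<le>k. f k j) = (\<Sum>j\<le>m. \<Sum>k=j..m. f k j)"
  by (induction m) (simp_all add: sum.distrib atLeastAtMostSuc_conv add_ac)

lemma sum_choose_choose_powers:
  fixes a b :: "'a::comm_ring_1"
  assumes "j \<le> m"
  shows "(\<Sum>k=j..m. of_nat (m choose k) * of_nat (k choose j) * a ^ (m - k) * b ^ (k - j))
       = of_nat (m choose j) * (a + b) ^ (m - j)"
proof -
  define h where "h i = of_nat ((m - j) choose i) * b ^ i * a ^ ((m - j) - i)" for i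
  have "of_nat (m choose k) * of_nat (k choose j) * a ^ (m - k) * b ^ (k - j)
      = of_nat (m choose j) * h (k - j)" if "k \<in> {j..m}" for k
  proof -
    from that have "(m choose k) * (k choose j) = (m choose j) * ((m - j) choose (k - j))"
      by (simp add: choose_mult)
    then have "of_nat (m choose k) * of_nat (k choose j)
        = (of_nat (m choose j) * of_nat ((m - j) choose (k - j)) :: 'a)"
      by (metis of_nat_mult)
    moreover have "m - k = (m - j) - (k - j)" using that by auto
    ultimately show ?thesis by (simp add: h_def mult_ac)
  qed
  then have "(\<Sum>k=j..m. of_nat (m choose k) * of_nat (k choose j) * a ^ (m - k) * b ^ (k - j))
      = of_nat (m choose j) * (\<Sum>k=j..m. h (k - j))"
    by (simp add: sum_distrib_left)
  also have "(\<Sum>k=j..m. h (k - j)) = (\<Sum>i\<le>m - j. h i)"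
    using sum.shift_bounds_cl_nat_ivl[of "\<lambda>k. h (k - j)" 0 j "m - j"] assms
    by (simp add: atLeast0AtMost)
  also have "\<dots> = (b + a) ^ (m - j)"
    unfolding h_def by (rule binomial_ring[symmetric])
  finally show ?thesis by (simp add: add.commute)
qed

lemma binomial_transform_binomial_transform:
  "binomial_transform a (binomial_transform b c) = binomial_transform (a + b) c"
proof
  fix m
  have "binomial_transform a (binomial_transform b c) m
      = (\<Sum>k\<le>m. \<Sum>j\<le>k. of_nat (m choose k) * a ^ (m - k) * (of_nat (k choose j) * b ^ (k - j) * c j))"
    by (simp add: binomial_transform_def sum_distrib_left)
  also have "\<dots> = (\<Sum>j\<le>m. \<Sum>k=j..m. of_nat (m choose k) * a ^ (m - k) * (of_nat (k choose j) * b ^ (k - j) * c j))"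
    by (rule sum_atMost_atMost_swap)
  also have "\<dots> = (\<Sum>j\<le>m. c j * (\<Sum>k=j..m. of_nat (m choose k) * of_nat (k choose j) * a ^ (m - k) * b ^ (k - j)))"
    by (simp add: sum_distrib_left mult_ac)
  also have "\<dots> = (\<Sum>j\<le>m. c j * (of_nat (m choose j) * (a + b) ^ (m - j)))"
    by (intro sum.cong refl) (simp only: atMost_iff sum_choose_choose_powers)
  also have "\<dots> = binomial_transform (a + b) c m"
    by (simp add: binomial_transform_def mult_ac)
  finally show "binomial_transform a (binomial_transform b c) m = binomial_transform (a + b) c m" .
qed

lemma binomial_transform_0: "binomial_transform 0 c = c"
proof
  fix m
  have "binomial_transform 0 c m = (\<Sum>k\<le>m. if k = m then c m else 0)"
    unfolding binomial_transform_def by (rule sum.cong) (auto simp: power_0_left)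
  then show "binomial_transform 0 c m = c m" by simp
qed

lemma binomial_transform_eq_iff:
  "binomial_transform a c = d \<longleftrightarrow> c = binomial_transform (- a) d"
  by (metis add.right_inverse add.left_inverse binomial_transform_0 binomial_transform_binomial_transform)

lemma lead_diag_eq_binomial_transform: "lead_diag = binomial_transform (-1)"
  by (auto simp: fun_eq_iff lead_diag_def binomial_transform_def mult_ac)

lemma lead_diag_depth_eq_binomial_transform:
  "lead_diag_depth r = binomial_transform (- real r)"
proof (induction r)
  case 0
  then show ?case by (simp add: lead_diag_depth_def binomial_transform_0 fun_eq_iff)
next
  case (Suc r)
  have "lead_diag_depth (Suc r) c = binomial_transform (-1) (binomial_transform (- real r) c)" for c
    using Suc by (simp add: lead_diag_depth_def lead_diag_eq_binomial_transform)
  then show ?case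
    by (simp add: binomial_transform_binomial_transform fun_eq_iff add.commute)
qed

lemma binomial_transform_seq_a:
  "binomial_transform (real r) (\<lambda>k. real (seq_a r k)) = (\<lambda>n. real (seq_a r (Suc n)))"
  by (simp add: binomial_transform_def fun_eq_iff)

lemma binomial_transform_shift_eq_iff_seq_a:
  "b = binomial_transform (real r) (\<lambda>n. if n = 0 then 1 else b (n - 1))
     \<longleftrightarrow> b = (\<lambda>n. real (seq_a r (Suc n)))"
proof
  assume fixpoint: "b = binomial_transform (real r) (\<lambda>n. if n = 0 then 1 else b (n - 1))"
  have "b n = real (seq_a r (Suc n))" for n
  proof (induction n rule: less_induct)
    case (less n)
    have "(if k = 0 then 1 else b (k - 1)) = real (seq_a r k)" if "k \<le> n" for k
      using that less[of "k - 1"] by (cases k) auto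
    then have "b n = binomial_transform (real r) (\<lambda>k. real (seq_a r k)) n"
      by (subst fixpoint) (simp add: binomial_transform_def)
    then show ?case by (simp only: binomial_transform_seq_a)
  qed
  then show "b = (\<lambda>n. real (seq_a r (Suc n)))" by blast
next
  assume "b = (\<lambda>n. real (seq_a r (Suc n)))"
  moreover have "(\<lambda>n. if n = 0 then 1 else real (seq_a r (Suc (n - 1)))) = (\<lambda>n. real (seq_a r n))"
    by (auto simp: fun_eq_iff gr0_conv_Suc)
  ultimately show "b = binomial_transform (real r) (\<lambda>n. if n = 0 then 1 else b (n - 1))"
    by (simp only: binomial_transform_seq_a)
qed

lemma seq_a_1_eq_bell: "seq_a 1 n = bell n"
  by (induction n rule: bell.induct) simp_all

theorem mainTheorem2:
  fixes r :: nat
  assumes "r \<ge> 1"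
  shows "(\<exists>!b :: nat \<Rightarrow> real. b 0 = 1 \<and>
            lead_diag_depth r b = (\<lambda>n. if n = 0 then 1 else b (n - 1)))
       \<and> (\<forall>b :: nat \<Rightarrow> real. b 0 = 1 \<and>
            lead_diag_depth r b = (\<lambda>n. if n = 0 then 1 else b (n - 1))
            \<longrightarrow> (\<forall>n. b n = real (seq_a r (n + 1))))
       \<and> (r = 1 \<longrightarrow> (\<forall>n. seq_a r (n + 1) = bell (n + 1)))"
proof -
  have characterisation:
    "b 0 = 1 \<and> lead_diag_depth r b = (\<lambda>n. if n = 0 then 1 else b (n - 1))
       \<longleftrightarrow> b = (\<lambda>n. real (seq_a r (Suc n)))" for b :: "nat \<Rightarrow> real"
    by (auto simp: lead_diag_depth_eq_binomial_transform binomial_transform_eq_iff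
        binomial_transform_shift_eq_iff_seq_a)
  then show ?thesis
    using seq_a_1_eq_bell by (simp del: seq_a.simps bell.simps)
qed

end
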